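(* $3/5<\hat q^2<2/3$.
   Context: For $q\in[0,1)$, $\mathrm{K}(q)=\int_0^{\pi/2}(1-q^2\sin^2\theta)^{-1/2}\,d\theta$ and $\mathrm{E}(q)=\int_0^{\pi/2}(1-q^2\sin^2\theta)^{1/2}\,d\theta$. $\hat q$ is the unique zero in $[1/\sqrt2,1)$ of $f(q)=(4q^4-5q^2+1)\mathrm{K}(q)+(-8q^4+8q^2-1)\mathrm{E}(q)$; moreover $f>0$ on $[1/\sqrt2,\hat q)$ and $f<0$ on $(\hat q,1)$. *)

theory Defs
  imports "HOL-Analysis.Analysis"
begin

definition ellK :: "real \<Rightarrow> real" where
  "ellK q = integral {0..pi/2} (\<lambda>\<theta>. 1 / sqrt (1 - q^2 * (sin \<theta>)^2))"

definition ellE :: "real \<Rightarrow> real" where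
  "ellE q = integral {0..pi/2} (\<lambda>\<theta>. sqrt (1 - q^2 * (sin \<theta>)^2))"

definition fq :: "real \<Rightarrow> real" where
  "fq q = (4*q^4 - 5*q^2 + 1) * ellK q + (-8*q^4 + 8*q^2 - 1) * ellE q"

definition qhat :: real where
  "qhat = (THE q. q \<in> {1/sqrt 2..<1} \<and> fq q = 0)"

end

theory Submission
  imports Defs
begin

text \<open>
  Write m = q^2, w_m = (1 - m sin^2)^(-1/2), K_m and J_m for the integrals of w_m and of
  sin^2 w_m over [0, pi/2]. Since E = K_m - m J_m, one gets fq q = q^2 K_m g(m, J_m / K_m)
  with g(m, r) = (3 - 4m) + (8m^2 - 8m + 1) r. The ratio J_m / K_m is the mean of sin^2 for
  the weight w_m. It is nondecreasing in m, because w_m2 / w_m1 is an increasing function of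
  sin^2, so it is at least its value 1/2 at m = 0. For m >= 1/2 an elementary analysis of g
  then shows that g(m, J_m / K_m) changes sign at most once, from positive to negative; this
  gives uniqueness of the zero. The sign is negative at m = 2/3 already because J_m / K_m >= 1/2,
  and positive at m = 3/5 by the bounds 1 + x/2 <= (1 - x)^(-1/2) <= 1 + x/2 + x^2 and
  Wallis' integrals of sin^2, sin^4, sin^6. The intermediate value theorem locates the zero.
\<close>

lemma has_integral_sin_power_add2:
  fixes n :: nat
  assumes "((\<lambda>t. sin t ^ n) has_integral I) {0..pi/2}"
  shows "((\<lambda>t. sin t ^ (n + 2)) has_integral (real n + 1) / (real n + 2) * I) {0..pi/2}"
proof -
  define F where "F t = - (sin t ^ (n + 1) * cos t)" for t :: real
  define f where "f t = (real n + 2) * sin t ^ (n + 2) - (real n + 1) * sin t ^ n" for t :: real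
  have "(f has_integral F (pi/2) - F 0) {0..pi/2}"
  proof (rule fundamental_theorem_of_calculus)
    fix x :: real
    have "(F has_real_derivative
        - ((1 + real n) * (cos x * sin x ^ n) * cos x + - sin x * sin x ^ Suc n)) (at x)"
      unfolding F_def Suc_eq_plus1[symmetric]
      by (intro DERIV_minus DERIV_mult DERIV_power_Suc DERIV_sin DERIV_cos)
    moreover have "- ((1 + real n) * (cos x * sin x ^ n) * cos x + - sin x * sin x ^ Suc n) = f x"
    proof -
      \<comment> \<open>abstracting sin x ^ n to p, since algebra cannot handle the symbolic exponent\<close>
      have "- ((1 + r) * (c * p) * c + - s * (s * p)) = (r + 2) * (p * s^2) - (r + 1) * p"
        if "s^2 + c^2 = 1" for s c p r :: real
        using that by algebra
      then show ?thesis
        unfolding f_def power_add power_Suc using sin_cos_squared_add[of x] by blast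
    qed
    ultimately show "(F has_vector_derivative f x) (at x within {0..pi/2})"
      by (simp add: has_real_derivative_iff_has_vector_derivative has_vector_derivative_at_within)
  qed simp
  from has_integral_add[OF this has_integral_mult_right[OF assms, of "real n + 1"]]
  have "((\<lambda>t. (real n + 2) * sin t ^ (n + 2)) has_integral (real n + 1) * I) {0..pi/2}"
    by (simp add: F_def f_def)
  from has_integral_mult_right[OF this, of "1 / (real n + 2)"] show ?thesis
    by simp
qed

lemma has_integral_sin_power_2_4_6:
  shows "((\<lambda>t. sin t ^ 2) has_integral pi/4) {0..pi/2}"
    and "((\<lambda>t. sin t ^ 4) has_integral 3*pi/16) {0..pi/2}"
    and "((\<lambda>t. sin t ^ 6) has_integral 5*pi/32) {0..pi/2}"
proof -
  have "((\<lambda>t. sin t ^ 0) has_integral pi/2) {0..pi/2}"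
    using has_integral_const_real[of "1::real" 0 "pi/2"] by simp
  from has_integral_sin_power_add2[OF this]
  show sin2: "((\<lambda>t. sin t ^ 2) has_integral pi/4) {0..pi/2}" by (simp add: power2_eq_square)
  from has_integral_sin_power_add2[OF sin2]
  show sin4: "((\<lambda>t. sin t ^ 4) has_integral 3*pi/16) {0..pi/2}" by simp
  from has_integral_sin_power_add2[OF sin4]
  show "((\<lambda>t. sin t ^ 6) has_integral 5*pi/32) {0..pi/2}" by simp
qed

lemma one_plus_half_le_inverse_sqrt:
  fixes x :: real
  assumes "0 \<le> x" "x < 1"
  shows "1 + x/2 \<le> 1 / sqrt (1 - x)"
proof -
  have "(1 + x/2)^2 * (1 - x) = 1 - 3/4 * x^2 - x^3/4"
    by (simp add: field_simps power2_eq_square power3_eq_cube)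
  also have "\<dots> \<le> 1"
    using assms zero_le_power[of x 3] zero_le_power2[of x] by linarith
  finally have "(1 + x/2)^2 \<le> 1 / (1 - x)"
    using assms by (simp add: pos_le_divide_eq)
  from real_le_rsqrt[OF this] show ?thesis
    by (simp add: real_sqrt_divide)
qed

lemma inverse_sqrt_le_quadratic:
  fixes x :: real
  assumes "0 \<le> x" "x \<le> 2/3"
  shows "1 / sqrt (1 - x) \<le> 1 + x/2 + x^2"
proof -
  have "x^3 \<le> (2/3)^3"
    using assms by (intro power_mono) auto
  then have "0 \<le> 5/4 - 5/4 * x - x^3"
    using assms by (simp add: power_divide)
  then have "0 \<le> x^2 * (5/4 - 5/4 * x - x^3)"
    by simp
  also have "\<dots> = (1 + x/2 + x^2)^2 * (1 - x) - 1"
    by (simp add: field_simps power2_eq_square power3_eq_cube)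
  finally have "1 / (1 - x) \<le> (1 + x/2 + x^2)^2"
    using assms by (simp add: pos_divide_le_eq)
  then show ?thesis
    using assms real_le_lsqrt[of "1 + x/2 + x^2" "1 / (1 - x)"] by (simp add: real_sqrt_divide)
qed

definition elliptic_weight :: "real \<Rightarrow> real \<Rightarrow> real" where
  "elliptic_weight m \<theta> = 1 / sqrt (1 - m * sin \<theta> ^ 2)"

definition ellK_par :: "real \<Rightarrow> real" where
  "ellK_par m = integral {0..pi/2} (elliptic_weight m)"

definition ellJ_par :: "real \<Rightarrow> real" where
  "ellJ_par m = integral {0..pi/2} (\<lambda>\<theta>. sin \<theta> ^ 2 * elliptic_weight m \<theta>)"

definition sin2_mean :: "real \<Rightarrow> real" where
  "sin2_mean m = ellJ_par m / ellK_par m"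

lemma sin_square_le_1: "sin t ^ 2 \<le> (1::real)"
  by (simp add: abs_square_le_1)

lemma mult_sin_square_less_1:
  fixes m t :: real
  assumes "m < 1"
  shows "m * sin t ^ 2 < 1"
proof (cases "m \<le> 0")
  case True
  then have "m * sin t ^ 2 \<le> 0"
    by (simp add: mult_nonpos_nonneg)
  then show ?thesis by simp
next
  case False
  then have "m * sin t ^ 2 \<le> m"
    using sin_square_le_1 by (simp add: mult_left_le)
  with assms show ?thesis by simp
qed

lemma elliptic_weight_pos: "m < 1 \<Longrightarrow> 0 < elliptic_weight m t"
  using mult_sin_square_less_1[of m t] by (simp add: elliptic_weight_def)

lemma elliptic_weight_lower:
  assumes "0 \<le> m" "m < 1"
  shows "1 + m * sin t ^ 2 / 2 \<le> elliptic_weight m t"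
  unfolding elliptic_weight_def
  using assms mult_sin_square_less_1[of m t]
  by (intro one_plus_half_le_inverse_sqrt) auto

lemma elliptic_weight_upper:
  assumes "0 \<le> m" "m \<le> 2/3"
  shows "elliptic_weight m t \<le> 1 + m * sin t ^ 2 / 2 + (m * sin t ^ 2)^2"
proof -
  have "m * sin t ^ 2 \<le> m"
    using assms sin_square_le_1 by (simp add: mult_left_le)
  with assms show ?thesis
    unfolding elliptic_weight_def by (intro inverse_sqrt_le_quadratic) auto
qed

lemma continuous_on_elliptic_weight: "m < 1 \<Longrightarrow> continuous_on S (elliptic_weight m)"
  unfolding elliptic_weight_def using mult_sin_square_less_1[of m]
  by (intro continuous_intros) (auto simp: less_imp_neq[symmetric])

lemma has_integral_ellK_par:
  "m < 1 \<Longrightarrow> (elliptic_weight m has_integral ellK_par m) {0..pi/2}"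
  unfolding ellK_par_def
  by (intro integrable_integral integrable_continuous_interval continuous_on_elliptic_weight)

lemma has_integral_ellJ_par:
  "m < 1 \<Longrightarrow> ((\<lambda>\<theta>. sin \<theta> ^ 2 * elliptic_weight m \<theta>) has_integral ellJ_par m) {0..pi/2}"
  unfolding ellJ_par_def
  by (intro integrable_integral integrable_continuous_interval continuous_intros
      continuous_on_elliptic_weight)

lemma ellK_par_lower:
  assumes "0 \<le> m" "m < 1"
  shows "pi/2 * (1 + m/4) \<le> ellK_par m"
proof (rule has_integral_le[OF _ has_integral_ellK_par])
  have "((\<lambda>t. 1 + m/2 * sin t ^ 2) has_integral pi/2 + m/2 * (pi/4)) {0..pi/2}"
    using has_integral_const_real[of "1::real" 0 "pi/2"]
    by (intro has_integral_add has_integral_mult_right has_integral_sin_power_2_4_6) auto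
  then show "((\<lambda>t. 1 + m/2 * sin t ^ 2) has_integral pi/2 * (1 + m/4)) {0..pi/2}"
    by (simp add: algebra_simps)
qed (use assms elliptic_weight_lower in auto)

lemma ellK_par_pos:
  assumes "0 \<le> m" "m < 1"
  shows "0 < ellK_par m"
proof -
  have "0 < pi/2 * (1 + m/4)"
    using assms by simp
  also have "\<dots> \<le> ellK_par m"
    using assms by (rule ellK_par_lower)
  finally show ?thesis .
qed

lemma ellJ_par_upper:
  assumes "0 \<le> m" "m \<le> 2/3"
  shows "ellJ_par m \<le> pi/4 * (1 + 3/8 * m + 5/8 * m^2)"
proof (rule has_integral_le[OF has_integral_ellJ_par])
  have "((\<lambda>t. sin t ^ 2 + m/2 * sin t ^ 4 + m^2 * sin t ^ 6) has_integral
      pi/4 + m/2 * (3*pi/16) + m^2 * (5*pi/32)) {0..pi/2}"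
    by (intro has_integral_add has_integral_mult_right has_integral_sin_power_2_4_6)
  then show "((\<lambda>t. sin t ^ 2 + m/2 * sin t ^ 4 + m^2 * sin t ^ 6) has_integral
      pi/4 * (1 + 3/8 * m + 5/8 * m^2)) {0..pi/2}"
    by (simp add: algebra_simps)
  fix t :: real
  have "sin t ^ 2 * elliptic_weight m t
      \<le> sin t ^ 2 * (1 + m * sin t ^ 2 / 2 + (m * sin t ^ 2)^2)"
    using assms elliptic_weight_upper by (simp add: mult_left_mono)
  also have "\<dots> = sin t ^ 2 + m/2 * sin t ^ 4 + m^2 * sin t ^ 6"
    by (simp add: algebra_simps eval_nat_numeral)
  finally show "sin t ^ 2 * elliptic_weight m t
      \<le> sin t ^ 2 + m/2 * sin t ^ 4 + m^2 * sin t ^ 6" .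
qed (use assms in auto)

lemma ellJ_par_nonneg:
  assumes "m < 1"
  shows "0 \<le> ellJ_par m"
proof (rule has_integral_nonneg[OF has_integral_ellJ_par[OF assms]])
  show "0 \<le> sin t ^ 2 * elliptic_weight m t" for t
    using elliptic_weight_pos[OF assms, of t] by simp
qed

lemma ellJ_par_le_ellK_par:
  assumes "m < 1"
  shows "ellJ_par m \<le> ellK_par m"
proof (rule has_integral_le[OF has_integral_ellJ_par[OF assms] has_integral_ellK_par[OF assms]])
  show "sin t ^ 2 * elliptic_weight m t \<le> elliptic_weight m t" for t
    using elliptic_weight_pos[OF assms, of t] sin_square_le_1[of t]
    by (simp add: mult_left_le_one_le)
qed

lemma sin2_mean_nonneg: "0 \<le> m \<Longrightarrow> m < 1 \<Longrightarrow> 0 \<le> sin2_mean m"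
  unfolding sin2_mean_def using ellJ_par_nonneg[of m] ellK_par_pos[of m] by simp

lemma sin2_mean_le_1: "0 \<le> m \<Longrightarrow> m < 1 \<Longrightarrow> sin2_mean m \<le> 1"
  unfolding sin2_mean_def using ellJ_par_le_ellK_par ellK_par_pos by simp

lemma sin2_mean_0: "sin2_mean 0 = 1/2"
proof -
  have "elliptic_weight 0 = (\<lambda>_. 1)"
    by (simp add: elliptic_weight_def fun_eq_iff)
  then have K0: "ellK_par 0 = pi/2" and J0: "ellJ_par 0 = pi/4"
    using has_integral_sin_power_2_4_6(1)
    by (simp_all add: ellK_par_def ellJ_par_def integral_unique)
  show ?thesis
    unfolding sin2_mean_def K0 J0 by simp
qed

lemma one_minus_ratio_mono:
  fixes a b y z :: real
  assumes "a \<le> b" "y \<le> z" "b * y < 1" "b * z < 1"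
  shows "(1 - a * y) / (1 - b * y) \<le> (1 - a * z) / (1 - b * z)"
proof -
  have "(1 - a * z) * (1 - b * y) - (1 - a * y) * (1 - b * z) = (b - a) * (z - y)"
    by (simp add: algebra_simps)
  also have "\<dots> \<ge> 0"
    using assms by simp
  finally show ?thesis
    using assms by (simp add: divide_simps)
qed

lemma elliptic_weight_ratio:
  assumes "m1 < 1" "m2 < 1"
  shows "elliptic_weight m2 t
    = sqrt ((1 - m1 * sin t ^ 2) / (1 - m2 * sin t ^ 2)) * elliptic_weight m1 t"
  using mult_sin_square_less_1[OF assms(1), of t] mult_sin_square_less_1[OF assms(2), of t]
  by (simp add: elliptic_weight_def real_sqrt_divide)

lemma sin2_mean_mono:
  assumes "0 \<le> m1" "m1 \<le> m2" "m2 < 1"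
  shows "sin2_mean m1 \<le> sin2_mean m2"
proof -
  define c where "c = sin2_mean m1"
  define R where "R y = sqrt ((1 - m1 * y) / (1 - m2 * y))" for y
  have c: "0 \<le> c" "c \<le> 1"
    using assms sin2_mean_nonneg sin2_mean_le_1 by (simp_all add: c_def)
  have R_mono: "R y \<le> R z" if "0 \<le> y" "y \<le> z" "z \<le> 1" for y z
  proof -
    have "m2 * y \<le> m2" "m2 * z \<le> m2"
      using assms that by (simp_all add: mult_left_le)
    then show ?thesis
      unfolding R_def using assms that by (intro real_sqrt_le_mono one_minus_ratio_mono) auto
  qed
  have integral: "((\<lambda>t. (c - sin t ^ 2) * elliptic_weight m t) has_integral
      c * ellK_par m - ellJ_par m) {0..pi/2}" if "m < 1" for m
    using has_integral_diff[OF has_integral_mult_right[OF has_integral_ellK_par[OF that], of c]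
        has_integral_ellJ_par[OF that]]
    by (simp add: algebra_simps)
  \<comment> \<open>the weight ratio R increases with sin^2, while c - sin^2 changes sign where sin^2 = c\<close>
  have "(c - sin t ^ 2) * elliptic_weight m2 t \<le> R c * ((c - sin t ^ 2) * elliptic_weight m1 t)"
    for t
  proof -
    have "(c - sin t ^ 2) * R (sin t ^ 2) \<le> (c - sin t ^ 2) * R c"
      using R_mono[of "sin t ^ 2" c] R_mono[of c "sin t ^ 2"] c sin_square_le_1[of t]
      by (cases "sin t ^ 2 \<le> c") (auto intro: mult_left_mono mult_left_mono_neg)
    then have "(c - sin t ^ 2) * R (sin t ^ 2) * elliptic_weight m1 t
        \<le> (c - sin t ^ 2) * R c * elliptic_weight m1 t"
      using elliptic_weight_pos[of m1 t] assms by (intro mult_right_mono) auto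
    then show ?thesis
      using elliptic_weight_ratio[of m1 m2 t] assms by (simp add: R_def mult_ac)
  qed
  then have "c * ellK_par m2 - ellJ_par m2 \<le> R c * (c * ellK_par m1 - ellJ_par m1)"
    using assms by (intro has_integral_le[OF integral has_integral_mult_right[OF integral]]) auto
  also have "c * ellK_par m1 - ellJ_par m1 = 0"
    using ellK_par_pos[of m1] assms by (simp add: c_def sin2_mean_def)
  finally show ?thesis
    using ellK_par_pos[of m2] assms
    by (simp add: c_def[symmetric] sin2_mean_def[of m2] le_divide_eq)
qed

lemma sin2_mean_ge_half: "0 \<le> m \<Longrightarrow> m < 1 \<Longrightarrow> 1/2 \<le> sin2_mean m"
  using sin2_mean_mono[of 0 m] sin2_mean_0 by simp

definition fq_factor :: "real \<Rightarrow> real" where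
  "fq_factor m = (3 - 4*m) + (8*m^2 - 8*m + 1) * sin2_mean m"

lemma ellK_eq_ellK_par: "ellK q = ellK_par (q^2)"
  by (simp add: ellK_def ellK_par_def elliptic_weight_def[abs_def])

lemma ellE_eq_ellK_par_ellJ_par:
  assumes "\<bar>q\<bar> < 1"
  shows "ellE q = ellK_par (q^2) - q^2 * ellJ_par (q^2)"
proof -
  define m where "m = q^2"
  have m: "m < 1"
    using assms by (simp add: m_def abs_square_less_1)
  have "sqrt (1 - m * sin t ^ 2) = elliptic_weight m t - m * (sin t ^ 2 * elliptic_weight m t)" for t
  proof -
    have "0 < 1 - m * sin t ^ 2"
      using mult_sin_square_less_1[OF m] by simp
    then show ?thesis
      by (simp add: elliptic_weight_def field_simps real_div_sqrt)
  qed
  moreover have "((\<lambda>t. elliptic_weight m t - m * (sin t ^ 2 * elliptic_weight m t)) has_integral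
      ellK_par m - m * ellJ_par m) {0..pi/2}"
    using m by (intro has_integral_diff has_integral_mult_right has_integral_ellK_par
        has_integral_ellJ_par)
  ultimately show ?thesis
    by (simp add: ellE_def m_def integral_unique)
qed

lemma fq_eq_fq_factor:
  assumes "\<bar>q\<bar> < 1"
  shows "fq q = q^2 * ellK_par (q^2) * fq_factor (q^2)"
proof -
  define m where "m = q^2"
  have "0 \<le> m" "m < 1"
    using assms by (simp_all add: m_def abs_square_less_1)
  then have "ellJ_par m = ellK_par m * sin2_mean m"
    using ellK_par_pos[of m] by (simp add: sin2_mean_def)
  moreover have "q^4 = m^2"
    by (simp add: m_def flip: power_mult)
  ultimately show ?thesis
    unfolding fq_def fq_factor_def ellK_eq_ellK_par ellE_eq_ellK_par_ellJ_par[OF assms]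
      m_def[symmetric]
    by (simp add: algebra_simps power2_eq_square)
qed

lemma quadratic_single_crossing:
  fixes m1 m2 r1 r2 :: real
  assumes "1/2 \<le> m1" "m1 < m2" "m2 < 1" "1/2 \<le> r1" "r1 \<le> r2" "r2 \<le> 1"
    and "(3 - 4*m1) + (8*m1^2 - 8*m1 + 1) * r1 \<le> 0"
  shows "(3 - 4*m2) + (8*m2^2 - 8*m2 + 1) * r2 < 0"
proof (cases "3/4 \<le> m2")
  case True
  have "(3 - 4*m2) * (1 - r2) \<le> 0"
    using True assms by (intro mult_nonpos_nonneg) auto
  moreover have "(2*m2 - 1) * (m2 - 1) < 0" "0 < r2"
    using True assms by (auto intro: mult_pos_neg)
  then have "(2*m2 - 1) * (m2 - 1) * r2 < 0"
    by (rule mult_neg_pos)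
  moreover have "(3 - 4*m2) + (8*m2^2 - 8*m2 + 1) * r2
      = (3 - 4*m2) * (1 - r2) + 4 * ((2*m2 - 1) * (m2 - 1) * r2)"
    by (simp add: algebra_simps power2_eq_square)
  ultimately show ?thesis
    by linarith
next
  case False
  \<comment> \<open>for m < 3/4 the coefficient of r is negative, and for fixed r in [0, 1] the
    expression decreases in m\<close>
  have "(m2 - 1/2)^2 < (1/4)^2"
    using False assms by (intro power_strict_mono) auto
  then have "(8*m2^2 - 8*m2 + 1) * (r2 - r1) \<le> 0"
    using assms by (intro mult_nonpos_nonneg) (auto simp: power2_eq_square algebra_simps)
  moreover have "8 * r1 * (m1 + m2 - 1) \<le> 8 * (m1 + m2 - 1)"
    using assms by (intro mult_right_mono) auto
  then have "(m2 - m1) * (8 * r1 * (m1 + m2 - 1) - 4) < 0"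
    using False assms by (intro mult_pos_neg) auto
  moreover have "(3 - 4*m2) + (8*m2^2 - 8*m2 + 1) * r2 = (3 - 4*m1) + (8*m1^2 - 8*m1 + 1) * r1
      + (m2 - m1) * (8 * r1 * (m1 + m2 - 1) - 4) + (8*m2^2 - 8*m2 + 1) * (r2 - r1)"
    by (simp add: algebra_simps power2_eq_square)
  ultimately show ?thesis
    using assms(7) by linarith
qed

lemma fq_factor_single_crossing:
  assumes "1/2 \<le> m1" "m1 < m2" "m2 < 1" "fq_factor m1 \<le> 0"
  shows "fq_factor m2 < 0"
proof -
  have "1/2 \<le> sin2_mean m1" "sin2_mean m1 \<le> sin2_mean m2" "sin2_mean m2 \<le> 1"
    using assms sin2_mean_ge_half[of m1] sin2_mean_mono[of m1 m2] sin2_mean_le_1[of m2] by auto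
  from quadratic_single_crossing[OF assms(1-3) this] show ?thesis
    using assms(4) by (simp add: fq_factor_def)
qed

lemma fq_factor_3_5_pos: "0 < fq_factor (3/5)"
proof -
  have "23/40 * pi \<le> ellK_par (3/5)" "ellJ_par (3/5) \<le> 29/80 * pi"
    using ellK_par_lower[of "3/5"] ellJ_par_upper[of "3/5"] by (simp_all add: power2_eq_square)
  then have "0 < 3/5 * ellK_par (3/5) - 23/25 * ellJ_par (3/5)"
    using pi_gt_zero by linarith
  also have "\<dots> = ellK_par (3/5) * fq_factor (3/5)"
    using ellK_par_pos[of "3/5"]
    by (simp add: fq_factor_def sin2_mean_def field_simps power2_eq_square)
  finally show ?thesis
    using ellK_par_pos[of "3/5"] by (simp add: zero_less_mult_iff)
qed

lemma fq_factor_2_3_neg: "fq_factor (2/3) < 0"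
proof -
  have "1/2 \<le> sin2_mean (2/3)"
    by (rule sin2_mean_ge_half) auto
  then show ?thesis
    by (simp add: fq_factor_def power2_eq_square)
qed

lemma fq_factor_zero_bounds:
  assumes "1/2 \<le> m" "m < 1" "fq_factor m = 0"
  shows "3/5 < m \<and> m < 2/3"
proof -
  have "\<not> m < 3/5"
  proof
    assume "m < 3/5"
    with assms have "fq_factor (3/5) < 0"
      using fq_factor_single_crossing[of m "3/5"] by simp
    with fq_factor_3_5_pos show False
      by simp
  qed
  moreover have "\<not> 2/3 < m"
  proof
    assume "2/3 < m"
    with assms have "fq_factor m < 0"
      using fq_factor_single_crossing[of "2/3" m] fq_factor_2_3_neg by simp
    with assms show False
      by simp
  qed
  moreover have "m \<noteq> 3/5" "m \<noteq> 2/3"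
    using fq_factor_3_5_pos fq_factor_2_3_neg assms(3) by (metis less_irrefl)+
  ultimately show ?thesis
    by linarith
qed

lemma continuous_on_ellK: "continuous_on {-1<..<1} ellK"
proof -
  have "continuous_on ({-1<..<1} \<times> cbox 0 (pi/2))
      (\<lambda>p. 1 / sqrt (1 - (fst p)^2 * (sin (snd p))^2))"
  proof (intro continuous_intros ballI)
    fix p :: "real \<times> real"
    assume "p \<in> {-1<..<1} \<times> cbox 0 (pi/2)"
    then have "fst p ^ 2 < 1"
      by (auto simp: abs_square_less_1)
    then show "sqrt (1 - (fst p)^2 * (sin (snd p))^2) \<noteq> 0"
      using mult_sin_square_less_1[of "fst p ^ 2" "snd p"] by simp
  qed
  then have "continuous_on {-1<..<1}
      (\<lambda>q. integral (cbox 0 (pi/2)) (\<lambda>t. 1 / sqrt (1 - q^2 * (sin t)^2)))"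
    by (intro integral_continuous_on_param) (simp add: case_prod_unfold)
  then show ?thesis
    unfolding ellK_def[abs_def] by simp
qed

lemma continuous_on_ellE: "continuous_on {-1<..<1} ellE"
proof -
  have "continuous_on ({-1<..<1} \<times> cbox 0 (pi/2))
      (\<lambda>p. sqrt (1 - (fst p)^2 * (sin (snd p))^2))"
    by (intro continuous_intros)
  then have "continuous_on {-1<..<1}
      (\<lambda>q. integral (cbox 0 (pi/2)) (\<lambda>t. sqrt (1 - q^2 * (sin t)^2)))"
    by (intro integral_continuous_on_param) (simp add: case_prod_unfold)
  then show ?thesis
    unfolding ellE_def[abs_def] by simp
qed

lemma continuous_on_fq: "continuous_on {-1<..<1} fq"
  unfolding fq_def[abs_def]
  by (intro continuous_intros continuous_on_compose2[OF continuous_on_ellK]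
      continuous_on_compose2[OF continuous_on_ellE]) auto

lemma Ico_inverse_sqrt2_bounds:
  assumes "q \<in> {1/sqrt 2..<1}"
  shows "0 < q" "1/2 \<le> q^2" "q^2 < 1"
proof -
  have "0 < 1 / sqrt (2::real)" "1 / sqrt 2 \<le> q"
    using assms by simp_all
  then show "0 < q"
    by linarith
  have "(1 / sqrt 2)^2 \<le> q^2"
    using assms by (intro power_mono) auto
  then show "1/2 \<le> q^2"
    by (simp add: power_divide)
  show "q^2 < 1"
    using assms \<open>0 < q\<close> by (simp add: power_less_one_iff)
qed

lemma fq_eq_0_iff:
  assumes "q \<in> {1/sqrt 2..<1}"
  shows "fq q = 0 \<longleftrightarrow> fq_factor (q^2) = 0"
  using assms Ico_inverse_sqrt2_bounds[OF assms] fq_eq_fq_factor[of q] ellK_par_pos[of "q^2"] by simp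

lemma fq_zero_exists: "\<exists>q \<in> {1/sqrt 2..<1}. fq q = 0"
proof -
  define a where "a = sqrt (3/5)"
  define b where "b = sqrt (2/3)"
  have "fq a = 3/5 * ellK_par (3/5) * fq_factor (3/5)"
    and "fq b = 2/3 * ellK_par (2/3) * fq_factor (2/3)"
    using fq_eq_fq_factor[of a] fq_eq_fq_factor[of b] by (simp_all add: a_def b_def)
  moreover have "0 < 3/5 * ellK_par (3/5) * fq_factor (3/5)"
    and "2/3 * ellK_par (2/3) * fq_factor (2/3) < 0"
    using ellK_par_pos[of "3/5"] ellK_par_pos[of "2/3"] fq_factor_3_5_pos fq_factor_2_3_neg
    by (auto intro: mult_pos_pos mult_pos_neg)
  ultimately have "fq b < 0" "0 < fq a"
    by simp_all
  moreover have "1/sqrt 2 \<le> a"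
    using real_sqrt_divide[of 1 2] real_sqrt_le_mono[of "1/2" "3/5"] by (simp add: a_def)
  moreover have "0 \<le> a" "a \<le> b" "b < 1"
    by (simp_all add: a_def b_def)
  moreover have "continuous_on {a..b} fq"
    using continuous_on_fq by (rule continuous_on_subset) (use calculation in auto)
  ultimately obtain q where "a \<le> q" "q \<le> b" "fq q = 0"
    using IVT2'[of fq b 0 a] by auto
  with \<open>1/sqrt 2 \<le> a\<close> \<open>b < 1\<close> show ?thesis
    by auto
qed

lemma fq_zero_unique:
  assumes "q1 \<in> {1/sqrt 2..<1}" "q2 \<in> {1/sqrt 2..<1}" "fq q1 = 0" "fq q2 = 0"
  shows "q1 = q2"
proof -
  have "\<not> q1 < q2" if "q1 \<in> {1/sqrt 2..<1}" "q2 \<in> {1/sqrt 2..<1}" "fq q1 = 0" "fq q2 = 0"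
    for q1 q2
  proof
    assume "q1 < q2"
    then have "q1^2 < q2^2"
      using Ico_inverse_sqrt2_bounds(1)[OF that(1)] by (intro power_strict_mono) auto
    moreover have "1/2 \<le> q1^2" "q2^2 < 1" "fq_factor (q1^2) = 0"
      using that Ico_inverse_sqrt2_bounds fq_eq_0_iff by auto
    ultimately have "fq_factor (q2^2) < 0"
      using fq_factor_single_crossing[of "q1^2" "q2^2"] by simp
    with that show False
      using fq_eq_0_iff by auto
  qed
  from this[of q1 q2] this[of q2 q1] assms show ?thesis
    by linarith
qed

lemma fq_zero_square_bounds:
  assumes "q \<in> {1/sqrt 2..<1}" "fq q = 0"
  shows "3/5 < q^2 \<and> q^2 < 2/3"
  using fq_factor_zero_bounds Ico_inverse_sqrt2_bounds[OF assms(1)] fq_eq_0_iff assms by blast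

theorem lemma2p5:
  shows "3/5 < qhat^2 \<and> qhat^2 < 2/3"
proof -
  have "qhat \<in> {1/sqrt 2..<1} \<and> fq qhat = 0"
    unfolding qhat_def by (rule theI') (use fq_zero_exists fq_zero_unique in blast)
  then show ?thesis
    using fq_zero_square_bounds by blast
qed

end
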